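(* Let $n$ be a positive integer and $N = n^2+n+1$. The equation $a^2+ab+b^2 = N$ has a solution in positive integers $(a,b)$ with $(a,b) \notin \{(n,1),(1,n)\}$ if and only if $N$ has at least two prime factors, counted with multiplicity, congruent to $1 \pmod 3$.
   Context: "Counted with multiplicity" means: if $N=\prod p^{e_p}$, the number of such factors is $\sum_{p\equiv 1 \ (\mathrm{mod}\ 3)} e_p$. *)

theory Defs
  imports "HOL-Computational_Algebra.Primes"
begin

definition count_1mod3_factors :: "nat \<Rightarrow> nat" where
  "count_1mod3_factors N = (\<Sum>p\<in>{p\<in>prime_factors N. p mod 3 = 1}. multiplicity p N)"

end

theory Submission
  imports Defs "HOL-Number_Theory.Number_Theory"
begin

(* Write N = n^2 + n + 1 and read a^2 + ab + b^2 as the norm of a - b\<omega>, \<omega>^2 + \<omega> + 1 = 0.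
   Prime factors of N other than 3 are 1 mod 3, and 9 does not divide N.

   If N has at most one prime factor 1 mod 3, then N = p or N = 3p with p prime. For a
   solution (a, b), the integers X = a - bn and Y = an - b satisfy XY = N(n - ab) and
   |X|, |Y| < N, and 3 divides both when it divides N; so N divides X or Y, and
   X = 0 or Y = 0 means (a, b) = (n, 1) or (1, n).

   Conversely, descent turns a root t of t^2 + t + 1 modulo m into a representation
   m = x^2 + xy + y^2 with x \<equiv> ty (mod m), positive after a unit rotation when m is not a
   square. If p^2 divides N, scale a representation of N/p^2 by p. Otherwise take primes
   p \<noteq> q dividing N and a root t \<equiv> n (mod p), t \<equiv> -1 - n (mod N/p): the trivial solutions
   belong to the roots n and -1 - n = 1/n modulo N, which are excluded modulo q and modulo p,
   because n and -1 - n are distinct modulo every prime factor of N except 3. *)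

section \<open>Representations by the norm form of the Eisenstein integers\<close>

lemma rotation_into_sector:
  fixes x y :: int
  assumes "P x y" and rotate: "\<And>x y. P x y \<Longrightarrow> P (-y) (x + y)" and "(x, y) \<noteq> (0, 0)"
  shows "\<exists>u v. P u v \<and> u > 0 \<and> v \<ge> 0"
proof -
  have P1: "P (-y) (x + y)" using rotate[OF \<open>P x y\<close>] .
  have P2: "P (-x - y) x" using rotate[OF P1] by simp
  have P3: "P (-x) (-y)" using rotate[OF P2] by simp
  have P4: "P y (-x - y)" using rotate[OF P3] by simp
  have P5: "P (x + y) (-x)" using rotate[OF P4] by (simp add: add.commute)
  consider "x > 0" "y \<ge> 0" | "y < 0" "x + y \<ge> 0" | "x + y < 0" "x \<ge> 0"
    | "x < 0" "y \<le> 0" | "y > 0" "x + y \<le> 0" | "x + y > 0" "x \<le> 0"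
    using \<open>(x, y) \<noteq> (0, 0)\<close> by (simp only: prod.inject de_Morgan_conj) arith
  then show ?thesis
    by cases (use \<open>P x y\<close> P1 P2 P3 P4 P5 in force)+
qed

(* Multiplication of x - y\<omega> by the unit -\<omega>. *)
lemma eisenstein_norm_rotate: "(-y)^2 + (-y) * (x + y) + (x + y)^2 = x^2 + x * y + (y::int)^2"
  by (simp add: algebra_simps power2_eq_square)

lemma cong_eisenstein_rotate:
  fixes m t x y :: int
  assumes "m dvd t^2 + t + 1" and "[x = t * y] (mod m)"
  shows "[-y = t * (x + y)] (mod m)"
proof -
  have "-y - t * (x + y) = (-t) * (x - t * y) - y * (t^2 + t + 1)"
    by (simp add: algebra_simps power2_eq_square)
  then show ?thesis using assms by (simp add: cong_iff_dvd_diff)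
qed

lemma centered_residue:
  fixes m t :: int
  assumes "m > 0"
  obtains t' where "[t' = t] (mod m)" and "\<bar>2 * t' + 1\<bar> \<le> m"
proof -
  define r where "r = t mod m"
  have r: "0 \<le> r" "r < m" "[r = t] (mod m)"
    using assms by (simp_all add: r_def cong_def)
  show ?thesis
  proof (cases "2 * r + 1 \<le> m")
    case True
    then show ?thesis using r by (intro that[of r]) auto
  next
    case False
    have "[r - m = t] (mod m)" using r(3) by (simp add: cong_def)
    then show ?thesis using r False by (intro that[of "r - m"]) auto
  qed
qed

lemma root_cofactor_bounds:
  fixes m k t :: int
  assumes "t^2 + t + 1 = m * k" and "\<bar>2 * t + 1\<bar> \<le> m" and "m \<ge> 2"
  shows "0 < k" and "k < m"
proof -
  have four: "4 * (m * k) = (2 * t + 1)^2 + 3"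
    unfolding assms(1)[symmetric] by (simp add: algebra_simps power2_eq_square)
  then have "0 < m * k" by (smt (verit) zero_le_power2)
  then show "0 < k" using \<open>m \<ge> 2\<close> by (simp add: zero_less_mult_iff)
  have "(2 * t + 1)^2 \<le> m^2"
    using assms(2) by (metis abs_ge_zero power2_abs power_mono)
  with four have "4 * (m * k) \<le> m * m + 3" by (simp add: power2_eq_square)
  moreover have "4 \<le> m * m" using mult_mono[of 2 m 2 m] \<open>m \<ge> 2\<close> by simp
  moreover have "m * m \<le> m * k" if "m \<le> k" using that \<open>m \<ge> 2\<close> by simp
  ultimately show "k < m" by linarith
qed

(* In the Eisenstein integers: (vm + tj) - j\<omega> = (t - \<omega>)(u + v + v\<omega>) / k,
   where u + v + v\<omega> is the conjugate of u - v\<omega>. *)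
lemma eisenstein_norm_lift:
  fixes m k t u v j :: int
  assumes root: "t^2 + t + 1 = m * k" and "k \<noteq> 0"
    and rep: "u^2 + u * v + v^2 = k" and u: "u = t * v + k * j"
  shows "(v * m + t * j)^2 + (v * m + t * j) * j + j^2 = m"
proof -
  have "k = (t * v + k * j)^2 + (t * v + k * j) * v + v^2" using rep u by simp
  also have "\<dots> = v^2 * (t^2 + t + 1) + k * j * (2 * t * v + v + k * j)"
    by (simp add: algebra_simps power2_eq_square)
  also have "\<dots> = k * (v^2 * m + j * (2 * t + 1) * v + k * j^2)"
    unfolding root by (simp add: algebra_simps power2_eq_square)
  finally have one: "v^2 * m + j * (2 * t + 1) * v + k * j^2 = 1"
    using \<open>k \<noteq> 0\<close> by (metis mult_cancel_left1)
  have "(v * m + t * j)^2 + (v * m + t * j) * j + j^2 = v^2 * m^2 + v * m * j * (2 * t + 1) + j^2 * (t^2 + t + 1)"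
    by (simp add: algebra_simps power2_eq_square)
  also have "\<dots> = m * (v^2 * m + j * (2 * t + 1) * v + k * j^2)"
    unfolding root by (simp add: algebra_simps power2_eq_square)
  finally show ?thesis using one by simp
qed

lemma eisenstein_norm_rep_of_root:
  fixes m t :: int
  assumes "m > 0" and "m dvd t^2 + t + 1"
  shows "\<exists>x y. x^2 + x * y + y^2 = m \<and> [x = t * y] (mod m)"
  using assms
proof (induction m arbitrary: t rule: measure_induct_rule[where f = nat])
  case (less m)
  show ?case
  proof (cases "m = 1")
    case True
    then show ?thesis by (intro exI[of _ 1] exI[of _ 0]) simp
  next
    case False
    with less.prems have "m \<ge> 2" by simp
    obtain t' where t': "[t' = t] (mod m)" "\<bar>2 * t' + 1\<bar> \<le> m"
      using centered_residue \<open>m > 0\<close> by blast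
    have "[t'^2 + t' + 1 = t^2 + t + 1] (mod m)"
      using t'(1) by (intro cong_add cong_pow cong_refl)
    with less.prems(2) have "m dvd t'^2 + t' + 1"
      using cong_dvd_iff by blast
    then obtain k where k: "t'^2 + t' + 1 = m * k" by blast
    have "0 < k" "k < m" using root_cofactor_bounds[OF k t'(2) \<open>m \<ge> 2\<close>] by auto
    then obtain u v where uv: "u^2 + u * v + v^2 = k" "[u = t' * v] (mod k)"
      using less.IH[of k t'] k by fastforce
    then obtain j where j: "u = t' * v + k * j"
      by (metis cong_iff_lin cong_sym)
    have "(v * m + t' * j)^2 + (v * m + t' * j) * j + j^2 = m"
      using eisenstein_norm_lift[OF k _ uv(1) j] \<open>0 < k\<close> by simp
    moreover have "[v * m + t' * j = 0 + t * j] (mod m)"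
      using t'(1) by (intro cong_add cong_mult cong_refl) (simp add: cong_0_iff)
    ultimately show ?thesis by auto
  qed
qed

lemma eisenstein_norm_rep_pos:
  fixes m :: nat and t :: int
  assumes "m > 0" and root: "int m dvd t^2 + t + 1" and not_square: "\<And>k. k^2 \<noteq> m"
  shows "\<exists>a b :: nat. a > 0 \<and> b > 0 \<and> a^2 + a * b + b^2 = m \<and> [int a = t * int b] (mod m)"
proof -
  let ?P = "\<lambda>x y. x^2 + x * y + y^2 = int m \<and> [x = t * y] (mod m)"
  obtain x y where "?P x y"
    using eisenstein_norm_rep_of_root \<open>m > 0\<close> root by (metis of_nat_0_less_iff)
  moreover have "(x, y) \<noteq> (0, 0)" using \<open>?P x y\<close> \<open>m > 0\<close> by auto
  ultimately obtain u v where uv: "?P u v" "u > 0" "v \<ge> 0"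
    using rotation_into_sector[of ?P] eisenstein_norm_rotate cong_eisenstein_rotate[OF root] by metis
  have "v \<noteq> 0"
  proof
    assume "v = 0"
    then have "int ((nat u)^2) = int m" using uv by simp
    with not_square show False by (metis of_nat_eq_iff)
  qed
  with uv have "int (nat u) = u" "int (nat v) = v" "nat u > 0" "nat v > 0" by auto
  moreover from this uv have "int ((nat u)^2 + nat u * nat v + (nat v)^2) = int m" by simp
  ultimately show ?thesis using uv by (metis of_nat_eq_iff)
qed

section \<open>Divisors of n^2 + n + 1\<close>

lemma cyclotomic3_not_square:
  fixes n k :: nat
  assumes "n > 0"
  shows "k^2 \<noteq> n^2 + n + 1"
proof
  assume k: "k^2 = n^2 + n + 1"
  then have "n^2 < k^2" and "k^2 < (n + 1)^2"
    using assms by (simp_all add: power2_eq_square)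
  then have "n < k" and "k < n + 1"
    using power_less_imp_less_base by blast+
  then show False by simp
qed

lemma three_dvd_eisenstein_norm_imp_cong:
  fixes x y :: int
  assumes "3 dvd x^2 + x * y + y^2"
  shows "[x = y] (mod 3)"
proof -
  have "x^2 + x * y + y^2 = (x - y)^2 + 3 * (x * y)"
    by (simp add: algebra_simps power2_eq_square)
  with assms have "3 dvd (x - y)^2" by (simp add: dvd_add_left_iff)
  then have "3 dvd x - y" by (rule prime_dvd_power[rotated]) simp
  then show ?thesis by (simp add: cong_iff_dvd_diff)
qed

lemma cyclotomic3_not_9_dvd: "\<not> 9 dvd (n::nat)^2 + n + 1"
proof
  assume dvd9: "9 dvd n^2 + n + 1"
  then have "3 dvd n^2 + n + 1" by (rule dvd_trans[rotated]) simp
  then have "int 3 dvd int (n^2 + n + 1)" by (simp only: of_nat_dvd_iff)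
  then have "3 dvd int n ^ 2 + int n * 1 + 1^2" by (simp add: ac_simps)
  then have "[int n = 1] (mod 3)" by (rule three_dvd_eisenstein_norm_imp_cong)
  then have "[n = 1] (mod 3)" by (metis cong_int_iff of_nat_1 of_nat_numeral)
  then have "n mod 3 = 1" by (simp add: cong_def)
  then obtain k where "n = 3 * k + 1" by (metis div_mod_decomp mult.commute)
  then have "n^2 + n + 1 = 9 * (k^2 + k) + 3" by (simp add: algebra_simps power2_eq_square)
  with dvd9 have "9 dvd 9 * (k^2 + k) + (3::nat)" by (simp only:)
  then have "9 dvd (3::nat)" using dvd_add_right_iff dvd_triv_left by blast
  then show False by simp
qed

lemma cyclotomic3_roots_distinct:
  fixes n r :: nat
  assumes "prime r" and "r \<noteq> 3" and "r dvd n^2 + n + 1"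
  shows "\<not> [int n = -1 - int n] (mod int r)"
proof
  assume "[int n = -1 - int n] (mod int r)"
  then have "int r dvd 2 * int n + 1" by (simp add: cong_iff_dvd_diff algebra_simps)
  moreover have "int r dvd int n^2 + int n + 1"
    using \<open>r dvd n^2 + n + 1\<close> by (metis of_nat_dvd_iff of_nat_add of_nat_power of_nat_1)
  ultimately have "int r dvd 4 * (int n^2 + int n + 1) - (2 * int n + 1)^2"
    by (intro dvd_diff dvd_mult) (simp_all add: power2_eq_square)
  also have "4 * (int n^2 + int n + 1) - (2 * int n + 1)^2 = 3"
    by (simp add: algebra_simps power2_eq_square)
  finally have "r dvd 3" by (metis of_nat_dvd_iff of_nat_numeral)
  with assms show False using primes_dvd_imp_eq[of r 3] by simp
qed

lemma cyclotomic3_cong_root: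
  fixes d t x :: int
  assumes "d dvd x^2 + x + 1" and "[t = x] (mod d) \<or> [t = -1 - x] (mod d)"
  shows "d dvd t^2 + t + 1"
proof -
  have "(-1 - x)^2 + (-1 - x) + 1 = x^2 + x + 1" by (simp add: algebra_simps power2_eq_square)
  then have "[t^2 + t + 1 = x^2 + x + 1] (mod d)"
    using assms(2) by (metis cong_add cong_pow cong_refl)
  with assms(1) show ?thesis by (simp add: cong_dvd_iff)
qed

lemma cyclotomic3_inverse_root:
  fixes d t x :: int
  assumes "d dvd x^2 + x + 1" and "[1 = t * x] (mod d)"
  shows "[t = -1 - x] (mod d)"
proof -
  have "t - (-1 - x) = (x + 1) * (1 - t * x) + t * (x^2 + x + 1)"
    by (simp add: algebra_simps power2_eq_square)
  then show ?thesis using assms by (simp add: cong_iff_dvd_diff)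
qed

lemma prime_dvd_cyclotomic3_mod_3:
  fixes n q :: nat
  assumes q: "prime q" and dvd: "q dvd n^2 + n + 1" and "q \<noteq> 3"
  shows "q mod 3 = 1"
proof -
  have N: "[n^2 + n + 1 = 0] (mod q)" using dvd by (simp add: cong_0_iff)
  have "[n^3 + (n^2 + n + 1) = n * (n^2 + n + 1) + 1] (mod q)"
    by (simp add: algebra_simps power2_eq_square power3_eq_cube)
  moreover have "[n^3 + (n^2 + n + 1) = n^3 + 0] (mod q)" "[n * (n^2 + n + 1) + 1 = n * 0 + 1] (mod q)"
    using N by (intro cong_add cong_mult cong_refl; simp)+
  ultimately have "[n^3 = 1] (mod q)" by (metis add_0 cong_sym cong_trans mult_zero_right add.right_neutral)
  then have ord_dvd: "ord q n dvd 3" using ord_divides[of n 3 q] by simp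
  have "\<not> [n = 1] (mod q)"
  proof
    assume "[n = 1] (mod q)"
    then have "[n^2 + n + 1 = 1^2 + 1 + 1] (mod q)" by (intro cong_add cong_pow cong_refl)
    then have "[n^2 + n + 1 = 3] (mod q)" by (simp add: numeral_3_eq_3)
    with N have "[3 = 0] (mod q)" by (metis cong_sym cong_trans)
    then have "q dvd 3" by (simp add: cong_0_iff)
    with q \<open>q \<noteq> 3\<close> show False using primes_dvd_imp_eq[of q 3] by simp
  qed
  then have "ord q n \<noteq> 1" using ord_eq_Suc_0_iff[of q n] by simp
  with ord_dvd have "ord q n = 3" using prime_nat_iff[of 3] by auto
  moreover have "coprime q n" using ord_dvd ord_eq_0[of q n] by auto
  ultimately have "3 dvd q - 1" using order_divides_totient[of q n] totient_prime[OF q] by simp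
  then show ?thesis using prime_ge_2_nat[OF q] by presburger
qed

section \<open>Counting prime factors congruent to 1 mod 3\<close>

lemma count_1mod3_factors_eq_size:
  "count_1mod3_factors N = size {#p \<in># prime_factorization N. p mod 3 = 1#}"
  unfolding count_1mod3_factors_def size_multiset_overloaded_eq
  by (intro sum.cong) (auto simp: count_prime_factorization_prime in_prime_factors_iff)

lemma count_1mod3_factors_le_1_cases:
  fixes N :: nat
  assumes "N > 0" and "\<not> 9 dvd N"
    and factors: "\<And>p. p \<in> prime_factors N \<Longrightarrow> p = 3 \<or> p mod 3 = 1"
    and "count_1mod3_factors N \<le> 1"
  shows "N = 1 \<or> (\<exists>c p. c \<in> {1, 3} \<and> prime p \<and> coprime c p \<and> N = c * p)"
proof -
  define A where "A = {#p \<in># prime_factorization N. p mod 3 = 1#}"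
  define B where "B = {#p \<in># prime_factorization N. p mod 3 \<noteq> 1#}"
  have "prime_factorization N = A + B"
    unfolding A_def B_def by (rule multiset_partition)
  then have "N = prod_mset A * prod_mset B"
    using \<open>N > 0\<close> by (metis prod_mset.union prod_mset_prime_factorization_nat)
  moreover have "B = replicate_mset (size B) 3"
    using factors by (intro set_mset_subset_singletonD) (auto simp: B_def)
  ultimately have N: "N = prod_mset A * 3 ^ size B"
    by (metis prod_mset_replicate_mset)
  have "size B \<le> 1"
  proof (rule ccontr)
    assume "\<not> size B \<le> 1"
    then have "3^2 dvd (3::nat) ^ size B" by (intro le_imp_power_dvd) simp
    then have "9 dvd N" using N by (simp add: dvd_mult2)
    with \<open>\<not> 9 dvd N\<close> show False ..
  qed
  then have c: "3 ^ size B \<in> {1, 3::nat}" by (cases "size B") auto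
  have "size A \<le> 1" using assms(4) by (simp add: count_1mod3_factors_eq_size A_def)
  then consider "size A = 0" | "size A = 1" by linarith
  then consider "A = {#}" | p where "A = {#p#}"
    by (cases; blast dest: size_1_singleton_mset)
  then show ?thesis
  proof cases
    case 1
    then have "N = 1 \<or> N = 1 * 3" using N c by auto
    moreover have "prime (3::nat)" "coprime 1 (3::nat)" by simp_all
    ultimately show ?thesis by blast
  next
    case (2 p)
    then have "p \<in># A" by simp
    then have "p \<in># prime_factorization N" "p mod 3 = 1" by (simp_all add: A_def)
    then have "prime p" "p \<noteq> 3" by (auto intro: in_prime_factors_imp_prime)
    then have "coprime (3 ^ size B) p" using c by (auto intro: primes_coprime)
    moreover have "N = 3 ^ size B * p" using N 2 by simp
    ultimately show ?thesis using c \<open>prime p\<close> by blast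
  qed
qed

lemma count_1mod3_factors_ge_2_cases:
  fixes N :: nat
  assumes "count_1mod3_factors N \<ge> 2"
  shows "(\<exists>p. prime p \<and> p^2 dvd N) \<or>
    (\<exists>p q. prime p \<and> prime q \<and> p \<noteq> q \<and> p mod 3 = 1 \<and> q mod 3 = 1 \<and>
      p dvd N \<and> q dvd N)"
proof -
  define A where "A = {#p \<in># prime_factorization N. p mod 3 = 1#}"
  have "size A \<ge> 2" using assms by (simp add: count_1mod3_factors_eq_size A_def)
  then obtain p where p: "p \<in># A" by (metis Suc_le_D numeral_2_eq_2 size_eq_Suc_imp_elem)
  with \<open>size A \<ge> 2\<close> have "A - {#p#} \<noteq> {#}"
    by (auto simp: size_Diff_singleton dest: arg_cong[of _ _ size])
  then obtain q where q: "q \<in># A - {#p#}" by blast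
  have A_factor: "prime r \<and> r mod 3 = 1 \<and> r dvd N" if "r \<in># A" for r
    using that by (auto simp: A_def in_prime_factors_iff)
  show ?thesis
  proof (cases "q = p")
    case True
    then have "2 \<le> count A p" using q by (simp add: in_diff_count)
    also have "\<dots> \<le> count (prime_factorization N) p" by (simp add: A_def)
    finally have "p^2 dvd N"
      using A_factor[OF p] by (intro multiplicity_dvd') (simp add: count_prime_factorization_prime)
    then show ?thesis using A_factor[OF p] by blast
  next
    case False
    then show ?thesis using A_factor[OF p] A_factor[OF in_diffD[OF q]] by blast
  qed
qed

section \<open>Nontrivial representations of n^2 + n + 1\<close>

lemma eisenstein_norm_cross_identity:
  fixes a b n :: "'a::comm_ring_1"
  assumes "a^2 + a * b + b^2 = n^2 + n + 1"
  shows "(a - b * n) * (a * n - b) = (n^2 + n + 1) * (n - a * b)"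
proof -
  have "(a - b * n) * (a * n - b) = n * (a^2 + a * b + b^2) - a * b * (n^2 + n + 1)"
    by (simp add: algebra_simps power2_eq_square)
  then show ?thesis unfolding assms by (simp add: algebra_simps)
qed

lemma scaled_rep_of_cyclotomic3_imp_1:
  fixes a b n :: nat
  assumes "a^2 + a * b + b^2 = n^2 + n + 1" and "a = b * n"
  shows "b = 1"
proof -
  have "b^2 * (n^2 + n + 1) = 1 * (n^2 + n + 1)"
    using assms by (simp add: algebra_simps power2_eq_square)
  then have "b^2 = 1" by (simp only: mult_right_cancel[of "n^2 + n + 1"])
  then show ?thesis by simp
qed

lemma mult_less_if_squares_less:
  fixes x y N :: nat
  assumes "x^2 < N" and "y^2 < N"
  shows "x * y < N"
proof -
  have "x * y \<le> max x y * max x y" by (simp add: mult_mono)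
  also have "\<dots> < N" using assms by (simp add: max_def power2_eq_square)
  finally show ?thesis .
qed

lemma abs_diff_mult_less:
  fixes a b c d N :: nat
  assumes "a^2 < N" "b^2 < N" "c^2 < N" "d^2 < N"
  shows "\<bar>int (a * c) - int (b * d)\<bar> < int N"
  using mult_less_if_squares_less[OF assms(1,3)] mult_less_if_squares_less[OF assms(2,4)] by linarith

lemma mult_prime_dvd_one_factor:
  fixes c p x y :: "'a::factorial_semiring_gcd"
  assumes "prime p" and "coprime c p" and "c dvd x" and "c dvd y" and "p dvd x * y"
  shows "c * p dvd x \<or> c * p dvd y"
  using assms by (auto simp: prime_dvd_mult_iff intro: divides_mult)

lemma three_dvd_cross_factors:
  fixes a b n :: int
  assumes "3 dvd n^2 + n + 1" and "a^2 + a * b + b^2 = n^2 + n + 1"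
  shows "3 dvd a - b * n" and "3 dvd a * n - b"
proof -
  have ab: "[a = b] (mod 3)" using assms by (intro three_dvd_eisenstein_norm_imp_cong) simp
  have n: "[n = 1] (mod 3)" using assms(1) by (intro three_dvd_eisenstein_norm_imp_cong) simp
  have "[a - b * n = b - b * 1] (mod 3)" by (intro cong_diff cong_mult ab n cong_refl)
  then show "3 dvd a - b * n" by (simp add: cong_0_iff)
  have "[a * n - b = b * 1 - b] (mod 3)" by (intro cong_diff cong_mult ab n cong_refl)
  then show "3 dvd a * n - b" by (simp add: cong_0_iff)
qed

lemma solution_trivial_if_count_1mod3_factors_le_1:
  fixes n a b :: nat
  assumes "n > 0" and count: "count_1mod3_factors (n^2 + n + 1) \<le> 1"
    and "a > 0" "b > 0" and sol: "a^2 + a * b + b^2 = n^2 + n + 1"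
  shows "(a, b) \<in> {(n, 1), (1, n)}"
proof (rule ccontr)
  assume nontrivial: "(a, b) \<notin> {(n, 1), (1, n)}"
  define N where "N = n^2 + n + 1"
  define X where "X = int a - int b * int n"
  define Y where "Y = int a * int n - int b"
  have N_int: "int N = int n^2 + int n + 1" by (simp add: N_def)
  have sol_int: "int a^2 + int a * int b + int b^2 = int n^2 + int n + 1"
    using arg_cong[OF sol, of int] by simp
  have "0 < a * b" "0 < a^2" "0 < b^2" using \<open>a > 0\<close> \<open>b > 0\<close> by simp_all
  then have sq: "a^2 < N" "b^2 < N" "n^2 < N" "1^2 < N"
    using sol \<open>n > 0\<close> unfolding N_def by (linarith, linarith, simp, simp)
  have "X \<noteq> 0"
    using scaled_rep_of_cyclotomic3_imp_1[OF sol] nontrivial by (auto simp: X_def simp flip: of_nat_mult)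
  moreover have "Y \<noteq> 0"
    using scaled_rep_of_cyclotomic3_imp_1[of b a n] sol nontrivial
    by (auto simp: Y_def algebra_simps simp flip: of_nat_mult)
  moreover have "\<bar>X\<bar> < int N" "\<bar>Y\<bar> < int N"
    using abs_diff_mult_less[OF sq(1,2,4,3)] abs_diff_mult_less[OF sq] by (simp_all add: X_def Y_def)
  ultimately have not_dvd: "\<not> int N dvd X" "\<not> int N dvd Y" by (auto dest: dvd_imp_le_int)
  have "\<forall>q \<in> prime_factors N. q = 3 \<or> q mod 3 = 1"
    using prime_dvd_cyclotomic3_mod_3 by (auto simp: N_def)
  moreover have "N \<noteq> 1" using \<open>n > 0\<close> by (simp add: N_def)
  ultimately obtain c p where cp: "c \<in> {1, 3}" "prime p" "coprime c p" "N = c * p"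
    using count_1mod3_factors_le_1_cases[of N] cyclotomic3_not_9_dvd count by (auto simp: N_def)
  then have "int c dvd int n^2 + int n + 1" unfolding N_int[symmetric] by simp
  then have "int c dvd X" "int c dvd Y"
    using cp(1) three_dvd_cross_factors[OF _ sol_int] by (auto simp: X_def Y_def)
  moreover have "int p dvd int n^2 + int n + 1" unfolding N_int[symmetric] cp(4) by simp
  then have "int p dvd X * Y"
    unfolding X_def Y_def eisenstein_norm_cross_identity[OF sol_int] by (rule dvd_mult2)
  ultimately have "int N dvd X \<or> int N dvd Y"
    using mult_prime_dvd_one_factor[of "int p" "int c"] cp by simp
  with not_dvd show False by blast
qed

lemma nontrivial_solution_if_square_factor:
  fixes n p :: nat
  assumes "n > 0" and "prime p" and "p^2 dvd n^2 + n + 1"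
  shows "\<exists>a b. a > 0 \<and> b > 0 \<and> a^2 + a * b + b^2 = n^2 + n + 1 \<and>
    (a, b) \<notin> {(n, 1), (1, n)}"
proof -
  obtain M where M: "n^2 + n + 1 = p^2 * M" using assms(3) by blast
  then have "M > 0" by (cases M) auto
  have "M dvd n^2 + n + 1" using M by simp
  then have "int M dvd int n^2 + int n + 1" by (metis of_nat_dvd_iff of_nat_add of_nat_power of_nat_1)
  moreover have "k^2 \<noteq> M" for k
    using cyclotomic3_not_square[OF \<open>n > 0\<close>, of "p * k"] M by (auto simp: power_mult_distrib)
  ultimately obtain a b where ab: "a > 0" "b > 0" "a^2 + a * b + b^2 = M"
    using eisenstein_norm_rep_pos[OF \<open>M > 0\<close>] by blast
  have "(p * a)^2 + (p * a) * (p * b) + (p * b)^2 = p^2 * (a^2 + a * b + b^2)"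
    by (simp add: algebra_simps power2_eq_square)
  also have "\<dots> = n^2 + n + 1" using ab M by simp
  finally have sol: "(p * a)^2 + (p * a) * (p * b) + (p * b)^2 = n^2 + n + 1" .
  have "p \<ge> 2" using prime_ge_2_nat[OF \<open>prime p\<close>] .
  then have "p * a \<ge> 2" "p * b \<ge> 2" using ab by (metis One_nat_def Suc_leI mult_le_mono nat_mult_1_right)+
  then show ?thesis using sol ab \<open>p \<ge> 2\<close> by (intro exI[of _ "p * a"] exI[of _ "p * b"]) auto
qed

lemma cong_root_excludes_trivial_solutions:
  fixes n p q a b :: nat and t :: int
  assumes "prime p" "prime q" "p \<noteq> 3" "q \<noteq> 3" "p dvd n^2 + n + 1" "q dvd n^2 + n + 1"
    and t: "[t = int n] (mod int p)" "[t = -1 - int n] (mod int q)"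
    and ab: "[int a = t * int b] (mod int (n^2 + n + 1))"
  shows "(a, b) \<notin> {(n, 1), (1, n)}"
proof
  assume "(a, b) \<in> {(n, 1), (1, n)}"
  then consider "(a, b) = (n, 1)" | "(a, b) = (1, n)" by blast
  then show False
  proof cases
    case 1
    have "int q dvd int (n^2 + n + 1)" using \<open>q dvd n^2 + n + 1\<close> by (simp only: of_nat_dvd_iff)
    with ab 1 have "[int n = t] (mod int q)" by (auto intro: cong_dvd_modulus)
    then have "[int n = -1 - int n] (mod int q)" using t(2) by (rule cong_trans)
    with cyclotomic3_roots_distinct assms(2,4,6) show False by blast
  next
    case 2
    have "int p dvd int (n^2 + n + 1)" using \<open>p dvd n^2 + n + 1\<close> by (simp only: of_nat_dvd_iff)
    with ab 2 have "[1 = t * int n] (mod int p)" by (auto intro: cong_dvd_modulus)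
    moreover have "int p dvd int n^2 + int n + 1"
      using \<open>p dvd n^2 + n + 1\<close> by (metis of_nat_dvd_iff of_nat_add of_nat_power of_nat_1)
    ultimately have "[t = -1 - int n] (mod int p)" by (intro cyclotomic3_inverse_root)
    with t(1) have "[int n = -1 - int n] (mod int p)" by (metis cong_sym cong_trans)
    with cyclotomic3_roots_distinct assms(1,3,5) show False by blast
  qed
qed

lemma nontrivial_solution_if_two_prime_factors:
  fixes n p q :: nat
  assumes "n > 0" and "prime p" "prime q" "p \<noteq> q" "p \<noteq> 3" "q \<noteq> 3"
    and "p dvd n^2 + n + 1" "q dvd n^2 + n + 1" "\<not> p^2 dvd n^2 + n + 1"
  shows "\<exists>a b. a > 0 \<and> b > 0 \<and> a^2 + a * b + b^2 = n^2 + n + 1 \<and>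
    (a, b) \<notin> {(n, 1), (1, n)}"
proof -
  define N where "N = n^2 + n + 1"
  obtain M where M: "N = p * M" using \<open>p dvd n^2 + n + 1\<close> by (auto simp: N_def)
  have "\<not> p dvd M" using M \<open>\<not> p^2 dvd n^2 + n + 1\<close> by (auto simp: N_def power2_eq_square)
  then have coprime: "coprime (int p) (int M)" using \<open>prime p\<close> by (simp add: prime_imp_coprime)
  then obtain t where t: "[t = int n] (mod int p)" "[t = -1 - int n] (mod int M)"
    using binary_chinese_remainder_int by blast
  have N_int: "int N = int n^2 + int n + 1" by (simp add: N_def)
  have "int p dvd int N" "int M dvd int N" using M by simp_all
  then have "int p dvd t^2 + t + 1" "int M dvd t^2 + t + 1"
    unfolding N_int using cyclotomic3_cong_root t by blast+
  with coprime M have "int N dvd t^2 + t + 1" by (simp add: divides_mult)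
  moreover have "k^2 \<noteq> N" for k using cyclotomic3_not_square[OF \<open>n > 0\<close>] by (simp add: N_def)
  ultimately obtain a b where ab: "a > 0" "b > 0" "a^2 + a * b + b^2 = N" "[int a = t * int b] (mod N)"
    using eisenstein_norm_rep_pos[of N t] by (auto simp: N_def)
  have "q dvd M" using M \<open>q dvd n^2 + n + 1\<close> \<open>prime p\<close> \<open>prime q\<close> \<open>p \<noteq> q\<close>
    by (metis N_def prime_dvd_mult_iff primes_dvd_imp_eq)
  then have "[t = -1 - int n] (mod int q)" using t(2) by (auto intro: cong_dvd_modulus)
  with assms t(1) ab(4) have "(a, b) \<notin> {(n, 1), (1, n)}"
    unfolding N_def by (intro cong_root_excludes_trivial_solutions) auto
  with ab show ?thesis by (auto simp: N_def)
qed

theorem theorem3: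
  fixes n :: nat
  assumes "n > 0"
  defines "N \<equiv> n^2 + n + 1"
  shows "(\<exists>a b :: nat. a > 0 \<and> b > 0 \<and> a^2 + a*b + b^2 = N \<and> (a, b) \<notin> {(n, 1), (1, n)})
         \<longleftrightarrow> count_1mod3_factors N \<ge> 2"
proof
  assume "\<exists>a b :: nat. a > 0 \<and> b > 0 \<and> a^2 + a*b + b^2 = N \<and> (a, b) \<notin> {(n, 1), (1, n)}"
  then obtain a b where sol: "a > 0" "b > 0" "a^2 + a*b + b^2 = N" "(a, b) \<notin> {(n, 1), (1, n)}"
    by blast
  show "count_1mod3_factors N \<ge> 2"
  proof (rule ccontr)
    assume "\<not> count_1mod3_factors N \<ge> 2"
    then have "count_1mod3_factors N \<le> 1" by simp
    with solution_trivial_if_count_1mod3_factors_le_1[OF \<open>n > 0\<close>] sol show False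
      unfolding N_def by blast
  qed
next
  assume count: "count_1mod3_factors N \<ge> 2"
  show "\<exists>a b :: nat. a > 0 \<and> b > 0 \<and> a^2 + a*b + b^2 = N \<and> (a, b) \<notin> {(n, 1), (1, n)}"
  proof (cases "\<exists>p. prime p \<and> p^2 dvd N")
    case True
    then show ?thesis
      using nontrivial_solution_if_square_factor[OF \<open>n > 0\<close>] unfolding N_def by blast
  next
    case False
    with count_1mod3_factors_ge_2_cases[OF count] obtain p q where pq:
      "prime p" "prime q" "p \<noteq> q" "p mod 3 = 1" "q mod 3 = 1" "p dvd N" "q dvd N" "\<not> p^2 dvd N"
      by blast
    then have "p \<noteq> 3" "q \<noteq> 3" by auto
    with pq show ?thesis
      using nontrivial_solution_if_two_prime_factors[OF \<open>n > 0\<close>, of p q] unfolding N_def by blast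
  qed
qed

end
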